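(* For every finite set of ground terms $\Gamma$ and ground term $M$, the judgment $\Gamma\vdash M$ is derivable in the natural deduction system $\mathcal N$ if and only if the sequent $\downarrow\Gamma\vdash\downarrow M$ is derivable in the sequent system $\mathcal S$.
   Context: Fix countably infinite sets of names and variables and the constructors $\mathsf{pub}$ (unary) and $\mathsf{sign},\mathsf{blind},\langle\cdot,\cdot\rangle,\{\cdot\}_{\cdot}$ (binary). Let $E$ be an equational theory whose signature $\Sigma_E$ is disjoint from the constructors, containing at most one associative-commutative (AC) binary symbol $\oplus$, and presented by a rewrite system $R_E$ that is terminating and confluent modulo AC of $\oplus$. Terms: names, variables, $\mathsf{pub}(M)$, $\mathsf{sign}(M,N)$, $\mathsf{blind}(M,N)$, $\langle M,N\rangle$, $\{M\}_N$, $g(M_1,\dots,M_j)$ with $g\in\Sigma_E$. $\equiv$ is equality modulo AC of $\oplus$, $\approx_E$ equality modulo $E$, $\downarrow M$ the $R_E$-normal form of $M$ modulo AC, $\downarrow\Gamma=\{\downarrow N\mid N\in\Gamma\}$. A term is guarded if it is a name, a variable, or headed by a constructor. An $E$-context is a term with holes built only from function symbols of $\Sigma_E$. $\Gamma,M$ means $\Gamma\cup\{M\}$. System $\mathcal N$ (judgments $\Gamma\vdash M$): ($id$) $\Gamma\vdash M$ if $M\in\Gamma$; ($e_E$) from $\Gamma\vdash\{M\}_K$, $\Gamma\vdash K$ infer $\Gamma\vdash M$; ($e_I$) from $\Gamma\vdash M$, $\Gamma\vdash K$ infer $\Gamma\vdash\{M\}_K$; ($p_E$) from $\Gamma\vdash\langle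 M,N\rangle$ infer $\Gamma\vdash M$, and also infer $\Gamma\vdash N$; ($p_I$) from $\Gamma\vdash M$, $\Gamma\vdash N$ infer $\Gamma\vdash\langle M,N\rangle$; ($\mathsf{sign}_E$) from $\Gamma\vdash\mathsf{sign}(M,K)$, $\Gamma\vdash\mathsf{pub}(K)$ infer $\Gamma\vdash M$; ($\mathsf{sign}_I$) from $\Gamma\vdash M$, $\Gamma\vdash K$ infer $\Gamma\vdash\mathsf{sign}(M,K)$; ($\mathsf{blind}_{E1}$) from $\Gamma\vdash\mathsf{blind}(M,K)$, $\Gamma\vdash K$ infer $\Gamma\vdash M$; ($\mathsf{blind}_I$) from $\Gamma\vdash M$, $\Gamma\vdash K$ infer $\Gamma\vdash\mathsf{blind}(M,K)$; ($\mathsf{blind}_{E2}$) from $\Gamma\vdash\mathsf{sign}(\mathsf{blind}(M,R),K)$, $\Gamma\vdash R$ infer $\Gamma\vdash\mathsf{sign}(M,K)$; ($g_I$, $g\in\Sigma_E$) from $\Gamma\vdash M_1,\dots,\Gamma\vdash M_j$ infer $\Gamma\vdash g(M_1,\dots,M_j)$; ($\approx$) from $\Gamma\vdash N$ infer $\Gamma\vdash M$ if $M\approx_E N$. System $\mathcal S$ (sequents all of whose terms are in normal form): (id) $\Gamma\vdash M$ with no premise if $M\approx_E C[M_1,\dots,M_k]$ for some $E$-context $C$ and $M_i\in\Gamma$; (cut) from $\Gamma\vdash M$, $\Gamma,M\vdash T$ infer $\Gamma\vdash T$; ($p_L$) from $\Gamma,\langle M,N\rangle,M,N\vdash T$ infer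 $\Gamma,\langle M,N\rangle\vdash T$; ($p_R$) from $\Gamma\vdash M$, $\Gamma\vdash N$ infer $\Gamma\vdash\langle M,N\rangle$; ($e_L$) from $\Gamma,\{M\}_K\vdash K$ and $\Gamma,\{M\}_K,M,K\vdash N$ infer $\Gamma,\{M\}_K\vdash N$; ($e_R$) from $\Gamma\vdash M$, $\Gamma\vdash K$ infer $\Gamma\vdash\{M\}_K$; ($\mathsf{sign}_L$) from $\Gamma,\mathsf{sign}(M,K),\mathsf{pub}(L),M\vdash N$ infer $\Gamma,\mathsf{sign}(M,K),\mathsf{pub}(L)\vdash N$ provided $K\equiv L$; ($\mathsf{sign}_R$) from $\Gamma\vdash M$, $\Gamma\vdash K$ infer $\Gamma\vdash\mathsf{sign}(M,K)$; ($\mathsf{blind}_{L1}$) from $\Gamma,\mathsf{blind}(M,K)\vdash K$ and $\Gamma,\mathsf{blind}(M,K),M,K\vdash N$ infer $\Gamma,\mathsf{blind}(M,K)\vdash N$; ($\mathsf{blind}_R$) from $\Gamma\vdash M$, $\Gamma\vdash K$ infer $\Gamma\vdash\mathsf{blind}(M,K)$; ($\mathsf{blind}_{L2}$) from $\Gamma,\mathsf{sign}(\mathsf{blind}(M,R),K)\vdash R$ and $\Gamma,\mathsf{sign}(\mathsf{blind}(M,R),K),\mathsf{sign}(M,K),R\vdash N$ infer $\Gamma,\mathsf{sign}(\mathsf{blind}(M,R),K)\vdash N$; ($gs$) from $\Gamma\vdash A$, $\Gamma,A\vdash M$ infer $\Gamma\vdash M$, provided $A$ is a guarded subterm of a term in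 $\Gamma\cup\{M\}$. *)

theory Defs
  imports Main
begin

text \<open>Pub, Sign, Blind, Pair, Enc are the constructors pub, sign, blind, pairing, and
  symmetric encryption (Enc M K stands for {M}_K).  Fn g Ms is g(M1,...,Mj) for a
  symbol g of the equational signature Sigma_E, which is the type 'f; hence Sigma_E
  is disjoint from the constructors by construction.\<close>

datatype 'f trm =
    Nm nat
  | Var nat
  | Pub "'f trm"
  | Sign "'f trm" "'f trm"
  | Blind "'f trm" "'f trm"
  | Pair "'f trm" "'f trm"
  | Enc "'f trm" "'f trm"
  | Fn 'f "'f trm list"

fun vars :: "'f trm \<Rightarrow> nat set" where
  "vars (Nm n) = {}"
| "vars (Var x) = {x}"
| "vars (Pub M) = vars M"
| "vars (Sign M N) = vars M \<union> vars N"
| "vars (Blind M N) = vars M \<union> vars N"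
| "vars (Pair M N) = vars M \<union> vars N"
| "vars (Enc M N) = vars M \<union> vars N"
| "vars (Fn g Ms) = \<Union> (vars ` set Ms)"

definition ground :: "'f trm \<Rightarrow> bool" where
  "ground M \<longleftrightarrow> vars M = {}"

fun wf_trm :: "('f \<Rightarrow> nat) \<Rightarrow> 'f trm \<Rightarrow> bool" where
  "wf_trm ar (Nm n) = True"
| "wf_trm ar (Var x) = True"
| "wf_trm ar (Pub M) = wf_trm ar M"
| "wf_trm ar (Sign M N) = (wf_trm ar M \<and> wf_trm ar N)"
| "wf_trm ar (Blind M N) = (wf_trm ar M \<and> wf_trm ar N)"
| "wf_trm ar (Pair M N) = (wf_trm ar M \<and> wf_trm ar N)"
| "wf_trm ar (Enc M N) = (wf_trm ar M \<and> wf_trm ar N)"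
| "wf_trm ar (Fn g Ms) = (length Ms = ar g \<and> (\<forall>M\<in>set Ms. wf_trm ar M))"

text \<open>Terms over Sigma_E and variables only (the language of E and R_E).\<close>
fun eterm :: "'f trm \<Rightarrow> bool" where
  "eterm (Var x) = True"
| "eterm (Fn g Ms) = (\<forall>M\<in>set Ms. eterm M)"
| "eterm _ = False"

fun subst :: "(nat \<Rightarrow> 'f trm) \<Rightarrow> 'f trm \<Rightarrow> 'f trm" where
  "subst \<sigma> (Nm n) = Nm n"
| "subst \<sigma> (Var x) = \<sigma> x"
| "subst \<sigma> (Pub M) = Pub (subst \<sigma> M)"
| "subst \<sigma> (Sign M N) = Sign (subst \<sigma> M) (subst \<sigma> N)"
| "subst \<sigma> (Blind M N) = Blind (subst \<sigma> M) (subst \<sigma> N)"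
| "subst \<sigma> (Pair M N) = Pair (subst \<sigma> M) (subst \<sigma> N)"
| "subst \<sigma> (Enc M N) = Enc (subst \<sigma> M) (subst \<sigma> N)"
| "subst \<sigma> (Fn g Ms) = Fn g (map (subst \<sigma>) Ms)"

fun subterms :: "'f trm \<Rightarrow> 'f trm set" where
  "subterms (Nm n) = {Nm n}"
| "subterms (Var x) = {Var x}"
| "subterms (Pub M) = insert (Pub M) (subterms M)"
| "subterms (Sign M N) = insert (Sign M N) (subterms M \<union> subterms N)"
| "subterms (Blind M N) = insert (Blind M N) (subterms M \<union> subterms N)"
| "subterms (Pair M N) = insert (Pair M N) (subterms M \<union> subterms N)"
| "subterms (Enc M N) = insert (Enc M N) (subterms M \<union> subterms N)"
| "subterms (Fn g Ms) = insert (Fn g Ms) (\<Union> (subterms ` set Ms))"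

fun guarded :: "'f trm \<Rightarrow> bool" where
  "guarded (Fn g Ms) = False"
| "guarded _ = True"

inductive ctx_cl :: "('f trm \<Rightarrow> 'f trm \<Rightarrow> bool) \<Rightarrow> 'f trm \<Rightarrow> 'f trm \<Rightarrow> bool"
  for r where
  root: "r s t \<Longrightarrow> ctx_cl r s t"
| pub: "ctx_cl r s t \<Longrightarrow> ctx_cl r (Pub s) (Pub t)"
| sign1: "ctx_cl r s t \<Longrightarrow> ctx_cl r (Sign s u) (Sign t u)"
| sign2: "ctx_cl r s t \<Longrightarrow> ctx_cl r (Sign u s) (Sign u t)"
| blind1: "ctx_cl r s t \<Longrightarrow> ctx_cl r (Blind s u) (Blind t u)"
| blind2: "ctx_cl r s t \<Longrightarrow> ctx_cl r (Blind u s) (Blind u t)"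
| pair1: "ctx_cl r s t \<Longrightarrow> ctx_cl r (Pair s u) (Pair t u)"
| pair2: "ctx_cl r s t \<Longrightarrow> ctx_cl r (Pair u s) (Pair u t)"
| enc1: "ctx_cl r s t \<Longrightarrow> ctx_cl r (Enc s u) (Enc t u)"
| enc2: "ctx_cl r s t \<Longrightarrow> ctx_cl r (Enc u s) (Enc u t)"
| fn: "ctx_cl r s t \<Longrightarrow> i < length Ms \<Longrightarrow> ctx_cl r (Fn g (Ms[i := s])) (Fn g (Ms[i := t]))"

text \<open>Root instances of the associativity and commutativity axioms of the (optional)
  AC symbol; oplus = None means there is no AC symbol.\<close>
fun ac_root :: "'f option \<Rightarrow> 'f trm \<Rightarrow> 'f trm \<Rightarrow> bool" where
  "ac_root None s t = False"
| "ac_root (Some f) s t =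
     (\<exists>x y z. (s = Fn f [x, Fn f [y, z]] \<and> t = Fn f [Fn f [x, y], z])
            \<or> (s = Fn f [Fn f [x, y], z] \<and> t = Fn f [x, Fn f [y, z]])
            \<or> (s = Fn f [x, y] \<and> t = Fn f [y, x]))"

definition ac_eq :: "'f option \<Rightarrow> 'f trm \<Rightarrow> 'f trm \<Rightarrow> bool" where
  "ac_eq oplus = (ctx_cl (ac_root oplus))\<^sup>*\<^sup>*"

definition rstep :: "('f trm \<times> 'f trm) set \<Rightarrow> 'f trm \<Rightarrow> 'f trm \<Rightarrow> bool" where
  "rstep RE = ctx_cl (\<lambda>s t. \<exists>(l, r)\<in>RE. \<exists>\<sigma>. s = subst \<sigma> l \<and> t = subst \<sigma> r)"

definition rstep_ac :: "'f option \<Rightarrow> ('f trm \<times> 'f trm) set \<Rightarrow> 'f trm \<Rightarrow> 'f trm \<Rightarrow> bool" where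
  "rstep_ac oplus RE s t \<longleftrightarrow> (\<exists>s' t'. ac_eq oplus s s' \<and> rstep RE s' t' \<and> ac_eq oplus t' t)"

text \<open>Equality modulo E: E is presented by RE together with AC of oplus, i.e. =_E is the
  conversion (equivalence) generated by RE-steps and AC-steps.\<close>
definition approxE :: "'f option \<Rightarrow> ('f trm \<times> 'f trm) set \<Rightarrow> 'f trm \<Rightarrow> 'f trm \<Rightarrow> bool" where
  "approxE oplus RE =
     (\<lambda>s t. rstep RE s t \<or> rstep RE t s \<or> ctx_cl (ac_root oplus) s t)\<^sup>*\<^sup>*"

definition normal :: "'f option \<Rightarrow> ('f trm \<times> 'f trm) set \<Rightarrow> 'f trm \<Rightarrow> bool" where
  "normal oplus RE t \<longleftrightarrow> \<not> (\<exists>u. rstep_ac oplus RE t u)"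

text \<open>The normal form \<down>M (some chosen representative of the AC-class of normal forms).\<close>
definition nf :: "'f option \<Rightarrow> ('f trm \<times> 'f trm) set \<Rightarrow> 'f trm \<Rightarrow> 'f trm" where
  "nf oplus RE M = (SOME N. (rstep_ac oplus RE)\<^sup>*\<^sup>* M N \<and> normal oplus RE N)"

definition E_theory :: "('f \<Rightarrow> nat) \<Rightarrow> 'f option \<Rightarrow> ('f trm \<times> 'f trm) set \<Rightarrow> bool" where
  "E_theory ar oplus RE \<longleftrightarrow>
     (\<forall>f. oplus = Some f \<longrightarrow> ar f = 2)
   \<and> (\<forall>(l, r)\<in>RE. eterm l \<and> eterm r \<and> wf_trm ar l \<and> wf_trm ar r
                   \<and> (\<forall>x. l \<noteq> Var x) \<and> vars r \<subseteq> vars l)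
   \<and> wfP (\<lambda>t s. rstep_ac oplus RE s t)
   \<and> (\<forall>s t. approxE oplus RE s t \<longrightarrow>
        (\<exists>s' t'. (rstep_ac oplus RE)\<^sup>*\<^sup>* s s' \<and> (rstep_ac oplus RE)\<^sup>*\<^sup>* t t'
                \<and> ac_eq oplus s' t'))"

section \<open>The natural deduction system N\<close>

inductive Nd :: "('f \<Rightarrow> nat) \<Rightarrow> 'f option \<Rightarrow> ('f trm \<times> 'f trm) set
                  \<Rightarrow> 'f trm set \<Rightarrow> 'f trm \<Rightarrow> bool"
  for ar oplus RE \<Gamma> where
  N_id: "M \<in> \<Gamma> \<Longrightarrow> Nd ar oplus RE \<Gamma> M"
| N_eE: "Nd ar oplus RE \<Gamma> (Enc M K) \<Longrightarrow> Nd ar oplus RE \<Gamma> K \<Longrightarrow> Nd ar oplus RE \<Gamma> M"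
| N_eI: "Nd ar oplus RE \<Gamma> M \<Longrightarrow> Nd ar oplus RE \<Gamma> K \<Longrightarrow> Nd ar oplus RE \<Gamma> (Enc M K)"
| N_pE1: "Nd ar oplus RE \<Gamma> (Pair M N) \<Longrightarrow> Nd ar oplus RE \<Gamma> M"
| N_pE2: "Nd ar oplus RE \<Gamma> (Pair M N) \<Longrightarrow> Nd ar oplus RE \<Gamma> N"
| N_pI: "Nd ar oplus RE \<Gamma> M \<Longrightarrow> Nd ar oplus RE \<Gamma> N \<Longrightarrow> Nd ar oplus RE \<Gamma> (Pair M N)"
| N_signE: "Nd ar oplus RE \<Gamma> (Sign M K) \<Longrightarrow> Nd ar oplus RE \<Gamma> (Pub K) \<Longrightarrow> Nd ar oplus RE \<Gamma> M"
| N_signI: "Nd ar oplus RE \<Gamma> M \<Longrightarrow> Nd ar oplus RE \<Gamma> K \<Longrightarrow> Nd ar oplus RE \<Gamma> (Sign M K)"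
| N_blindE1: "Nd ar oplus RE \<Gamma> (Blind M K) \<Longrightarrow> Nd ar oplus RE \<Gamma> K \<Longrightarrow> Nd ar oplus RE \<Gamma> M"
| N_blindI: "Nd ar oplus RE \<Gamma> M \<Longrightarrow> Nd ar oplus RE \<Gamma> K \<Longrightarrow> Nd ar oplus RE \<Gamma> (Blind M K)"
| N_blindE2: "Nd ar oplus RE \<Gamma> (Sign (Blind M R) K) \<Longrightarrow> Nd ar oplus RE \<Gamma> R
              \<Longrightarrow> Nd ar oplus RE \<Gamma> (Sign M K)"
| N_gI: "length Ms = ar g \<Longrightarrow> (\<forall>M\<in>set Ms. Nd ar oplus RE \<Gamma> M) \<Longrightarrow> Nd ar oplus RE \<Gamma> (Fn g Ms)"
| N_approx: "Nd ar oplus RE \<Gamma> N \<Longrightarrow> approxE oplus RE M N \<Longrightarrow> Nd ar oplus RE \<Gamma> M"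

section \<open>The sequent system S\<close>

inductive_set ectx_cl :: "('f \<Rightarrow> nat) \<Rightarrow> 'f trm set \<Rightarrow> 'f trm set" for ar \<Gamma> where
  hole: "M \<in> \<Gamma> \<Longrightarrow> M \<in> ectx_cl ar \<Gamma>"
| fn: "length Ms = ar g \<Longrightarrow> (\<forall>M\<in>set Ms. M \<in> ectx_cl ar \<Gamma>) \<Longrightarrow> Fn g Ms \<in> ectx_cl ar \<Gamma>"

definition nfseq :: "'f option \<Rightarrow> ('f trm \<times> 'f trm) set \<Rightarrow> 'f trm set \<Rightarrow> 'f trm \<Rightarrow> bool" where
  "nfseq oplus RE \<Gamma> M \<longleftrightarrow> (\<forall>N\<in>\<Gamma>. normal oplus RE N) \<and> normal oplus RE M"

text \<open>Every sequent occurring in a derivation must be in normal form; this is imposed on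
  the conclusion of every rule (premises are derivable sequents, hence in normal form).\<close>
inductive Sq :: "('f \<Rightarrow> nat) \<Rightarrow> 'f option \<Rightarrow> ('f trm \<times> 'f trm) set
                  \<Rightarrow> 'f trm set \<Rightarrow> 'f trm \<Rightarrow> bool"
  for ar oplus RE where
  S_id: "nfseq oplus RE \<Gamma> M \<Longrightarrow> C \<in> ectx_cl ar \<Gamma> \<Longrightarrow> approxE oplus RE M C
         \<Longrightarrow> Sq ar oplus RE \<Gamma> M"
| S_cut: "nfseq oplus RE \<Gamma> T \<Longrightarrow> Sq ar oplus RE \<Gamma> M \<Longrightarrow> Sq ar oplus RE (insert M \<Gamma>) T
         \<Longrightarrow> Sq ar oplus RE \<Gamma> T"
| S_pL: "nfseq oplus RE (insert (Pair M N) \<Gamma>) T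
         \<Longrightarrow> Sq ar oplus RE (insert N (insert M (insert (Pair M N) \<Gamma>))) T
         \<Longrightarrow> Sq ar oplus RE (insert (Pair M N) \<Gamma>) T"
| S_pR: "nfseq oplus RE \<Gamma> (Pair M N) \<Longrightarrow> Sq ar oplus RE \<Gamma> M \<Longrightarrow> Sq ar oplus RE \<Gamma> N
         \<Longrightarrow> Sq ar oplus RE \<Gamma> (Pair M N)"
| S_eL: "nfseq oplus RE (insert (Enc M K) \<Gamma>) N
         \<Longrightarrow> Sq ar oplus RE (insert (Enc M K) \<Gamma>) K
         \<Longrightarrow> Sq ar oplus RE (insert K (insert M (insert (Enc M K) \<Gamma>))) N
         \<Longrightarrow> Sq ar oplus RE (insert (Enc M K) \<Gamma>) N"
| S_eR: "nfseq oplus RE \<Gamma> (Enc M K) \<Longrightarrow> Sq ar oplus RE \<Gamma> M \<Longrightarrow> Sq ar oplus RE \<Gamma> K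
         \<Longrightarrow> Sq ar oplus RE \<Gamma> (Enc M K)"
| S_signL: "nfseq oplus RE (insert (Pub L) (insert (Sign M K) \<Gamma>)) N
         \<Longrightarrow> ac_eq oplus K L
         \<Longrightarrow> Sq ar oplus RE (insert M (insert (Pub L) (insert (Sign M K) \<Gamma>))) N
         \<Longrightarrow> Sq ar oplus RE (insert (Pub L) (insert (Sign M K) \<Gamma>)) N"
| S_signR: "nfseq oplus RE \<Gamma> (Sign M K) \<Longrightarrow> Sq ar oplus RE \<Gamma> M \<Longrightarrow> Sq ar oplus RE \<Gamma> K
         \<Longrightarrow> Sq ar oplus RE \<Gamma> (Sign M K)"
| S_blindL1: "nfseq oplus RE (insert (Blind M K) \<Gamma>) N
         \<Longrightarrow> Sq ar oplus RE (insert (Blind M K) \<Gamma>) K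
         \<Longrightarrow> Sq ar oplus RE (insert K (insert M (insert (Blind M K) \<Gamma>))) N
         \<Longrightarrow> Sq ar oplus RE (insert (Blind M K) \<Gamma>) N"
| S_blindR: "nfseq oplus RE \<Gamma> (Blind M K) \<Longrightarrow> Sq ar oplus RE \<Gamma> M \<Longrightarrow> Sq ar oplus RE \<Gamma> K
         \<Longrightarrow> Sq ar oplus RE \<Gamma> (Blind M K)"
| S_blindL2: "nfseq oplus RE (insert (Sign (Blind M R) K) \<Gamma>) N
         \<Longrightarrow> Sq ar oplus RE (insert (Sign (Blind M R) K) \<Gamma>) R
         \<Longrightarrow> Sq ar oplus RE (insert R (insert (Sign M K) (insert (Sign (Blind M R) K) \<Gamma>))) N
         \<Longrightarrow> Sq ar oplus RE (insert (Sign (Blind M R) K) \<Gamma>) N"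
| S_gs: "nfseq oplus RE \<Gamma> M \<Longrightarrow> Sq ar oplus RE \<Gamma> A \<Longrightarrow> Sq ar oplus RE (insert A \<Gamma>) M
         \<Longrightarrow> guarded A \<Longrightarrow> A \<in> (\<Union>N\<in>insert M \<Gamma>. subterms N)
         \<Longrightarrow> Sq ar oplus RE \<Gamma> M"

end

theory Submission
  imports Defs
begin

text \<open>Soundness of \<open>\<S>\<close> is a rule-by-rule simulation in \<open>\<N>\<close>.  For completeness, every rule
  of \<open>\<N>\<close> is simulated on normal forms.  Since the left-hand sides of \<open>R\<^sub>E\<close> are rooted in
  \<open>\<Sigma>\<^sub>E\<close>, a constructor applied to normal terms is again normal, so \<open>\<down>\<langle>M,K\<rangle>\<close> can be
  exchanged by cut and \<open>(id)\<close> for the \<open>E\<close>-equal normal term \<open>\<langle>\<down>M,\<down>K\<rangle>\<close>, to which the left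
  rules of \<open>\<S>\<close> apply directly.  In particular the premises of \<open>(sign\<^sub>L)\<close> can be arranged
  with syntactically equal keys, so only termination of \<open>R\<^sub>E\<close> is used, not confluence.\<close>

lemma ctx_cl_sym:
  assumes "\<And>s t. r s t \<Longrightarrow> r t s" "ctx_cl r s t"
  shows "ctx_cl r t s"
  using assms(2) by (induction rule: ctx_cl.induct) (auto intro: ctx_cl.intros assms(1))

lemma ac_root_sym: "ac_root oplus s t \<Longrightarrow> ac_root oplus t s"
  by (cases oplus) auto

lemma symp_approxE_step:
  "symp (\<lambda>s t. rstep RE s t \<or> rstep RE t s \<or> ctx_cl (ac_root oplus) s t)"
  using ctx_cl_sym[of "ac_root oplus", OF ac_root_sym] by (auto intro: sympI)

lemma approxE_refl [simp]: "approxE oplus RE s s"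
  unfolding approxE_def by simp

lemma approxE_sym: "approxE oplus RE s t \<Longrightarrow> approxE oplus RE t s"
  unfolding approxE_def by (rule sympD[OF symp_rtranclp[OF symp_approxE_step]])

lemma approxE_trans: "approxE oplus RE s t \<Longrightarrow> approxE oplus RE t u \<Longrightarrow> approxE oplus RE s u"
  unfolding approxE_def by simp

lemma ac_eq_refl [simp]: "ac_eq oplus s s"
  unfolding ac_eq_def by simp

lemma ac_eq_rstep_imp_rstep_ac: "ac_eq oplus s s' \<Longrightarrow> rstep RE s' t \<Longrightarrow> rstep_ac oplus RE s t"
  unfolding rstep_ac_def using ac_eq_refl by blast

lemma ac_eq_imp_approxE: "ac_eq oplus s t \<Longrightarrow> approxE oplus RE s t"
  unfolding ac_eq_def approxE_def by (erule rtranclp_mono[THEN predicate2D, rotated]) auto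

lemma rstep_ac_imp_approxE: "rstep_ac oplus RE s t \<Longrightarrow> approxE oplus RE s t"
proof -
  have "rstep RE s t \<Longrightarrow> approxE oplus RE s t" for s t
    unfolding approxE_def by auto
  then show "rstep_ac oplus RE s t \<Longrightarrow> approxE oplus RE s t"
    unfolding rstep_ac_def by (meson ac_eq_imp_approxE approxE_trans)
qed

lemma rtranclp_rstep_ac_imp_approxE: "(rstep_ac oplus RE)\<^sup>*\<^sup>* s t \<Longrightarrow> approxE oplus RE s t"
  by (induction rule: rtranclp_induct) (auto intro: approxE_trans rstep_ac_imp_approxE)

lemma approxE_ctx:
  assumes F: "\<And>r s t. ctx_cl r s t \<Longrightarrow> ctx_cl r (F s) (F t)"
    and "approxE oplus RE x y"
  shows "approxE oplus RE (F x) (F y)"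
  using assms(2) unfolding approxE_def rstep_def
  by (induction rule: rtranclp_induct) (auto intro: rtranclp.rtrancl_into_rtrancl F)

lemma approxE_Pub: "approxE oplus RE x x' \<Longrightarrow> approxE oplus RE (Pub x) (Pub x')"
  by (rule approxE_ctx) (auto intro: ctx_cl.intros)

lemma approxE_Fn_append:
  "list_all2 (approxE oplus RE) Ms Ns \<Longrightarrow> approxE oplus RE (Fn g (pre @ Ms)) (Fn g (pre @ Ns))"
proof (induction arbitrary: pre rule: list_all2_induct)
  case (Cons M Ms N Ns)
  have "approxE oplus RE (Fn g ((pre @ M # Ms)[length pre := M])) (Fn g ((pre @ M # Ms)[length pre := N]))"
    by (rule approxE_ctx[where F = "\<lambda>x. Fn g ((pre @ M # Ms)[length pre := x])"])
      (use Cons.hyps ctx_cl.fn[where Ms = "pre @ M # Ms" and i = "length pre"] in auto)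
  then have "approxE oplus RE (Fn g (pre @ M # Ms)) (Fn g (pre @ N # Ms))"
    by simp
  moreover have "approxE oplus RE (Fn g ((pre @ [N]) @ Ms)) (Fn g ((pre @ [N]) @ Ns))"
    by (rule Cons.IH)
  ultimately show ?case by (auto intro: approxE_trans)
qed simp

lemma approxE_Fn: "list_all2 (approxE oplus RE) Ms Ns \<Longrightarrow> approxE oplus RE (Fn g Ms) (Fn g Ns)"
  using approxE_Fn_append[where pre = "[]"] by simp

datatype bincon = SignC | BlindC | PairC | EncC

fun bin_app :: "bincon \<Rightarrow> 'f trm \<Rightarrow> 'f trm \<Rightarrow> 'f trm" where
  "bin_app SignC x y = Sign x y"
| "bin_app BlindC x y = Blind x y"
| "bin_app PairC x y = Pair x y"
| "bin_app EncC x y = Enc x y"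

lemma approxE_bin_app:
  assumes "approxE oplus RE x x'" "approxE oplus RE y y'"
  shows "approxE oplus RE (bin_app b x y) (bin_app b x' y')"
proof -
  have "approxE oplus RE (bin_app b x y) (bin_app b x' y)"
    by (rule approxE_ctx[OF _ assms(1)]) (cases b; auto intro: ctx_cl.intros)
  moreover have "approxE oplus RE (bin_app b x' y) (bin_app b x' y')"
    by (rule approxE_ctx[OF _ assms(2)]) (cases b; auto intro: ctx_cl.intros)
  ultimately show ?thesis by (rule approxE_trans)
qed

lemma ctx_cl_bin_app_cases:
  assumes root: "\<forall>s t. r s t \<longrightarrow> \<not> guarded s"
    and "ctx_cl r (bin_app b x y) t"
  shows "(\<exists>x'. t = bin_app b x' y \<and> ctx_cl r x x') \<or> (\<exists>y'. t = bin_app b x y' \<and> ctx_cl r y y')"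
proof -
  have "\<not> r (bin_app b x y) t" using root by (cases b) fastforce+
  then show ?thesis using assms(2) by (cases b) (auto elim: ctx_cl.cases)
qed

lemma ctx_cl_Pub_cases:
  assumes root: "\<forall>s t. r s t \<longrightarrow> \<not> guarded s"
    and "ctx_cl r (Pub x) t"
  shows "\<exists>x'. t = Pub x' \<and> ctx_cl r x x'"
proof -
  have "\<not> r (Pub x) t" using root by fastforce
  then show ?thesis using assms(2) by (auto elim: ctx_cl.cases)
qed

lemma ac_root_unguarded: "\<forall>s t. ac_root oplus s t \<longrightarrow> \<not> guarded s"
  by (cases oplus) auto

lemma ac_eq_bin_app_cases:
  "ac_eq oplus (bin_app b x y) t \<Longrightarrow> \<exists>x' y'. t = bin_app b x' y' \<and> ac_eq oplus x x' \<and> ac_eq oplus y y'"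
  unfolding ac_eq_def
proof (induction rule: rtranclp_induct)
  case (step u v)
  then obtain x' y' where "u = bin_app b x' y'"
    and "(ctx_cl (ac_root oplus))\<^sup>*\<^sup>* x x'" "(ctx_cl (ac_root oplus))\<^sup>*\<^sup>* y y'"
    by blast
  moreover from step(2) this(1) have "ctx_cl (ac_root oplus) (bin_app b x' y') v"
    by simp
  note ctx_cl_bin_app_cases[OF ac_root_unguarded this]
  ultimately show ?case
    by (auto intro: rtranclp.rtrancl_into_rtrancl)
qed auto

lemma ac_eq_Pub_cases: "ac_eq oplus (Pub x) t \<Longrightarrow> \<exists>x'. t = Pub x' \<and> ac_eq oplus x x'"
  unfolding ac_eq_def
proof (induction rule: rtranclp_induct)
  case (step u v)
  then obtain x' where "u = Pub x'" "(ctx_cl (ac_root oplus))\<^sup>*\<^sup>* x x'"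
    by blast
  moreover from step(2) this(1) have "ctx_cl (ac_root oplus) (Pub x') v"
    by simp
  note ctx_cl_Pub_cases[OF ac_root_unguarded this]
  ultimately show ?case
    by (auto intro: rtranclp.rtrancl_into_rtrancl)
qed auto

context
  fixes ar oplus RE
  assumes E: "E_theory ar oplus RE"
begin

lemma rule_instance_unguarded:
  "\<forall>s t. (\<exists>(l, r)\<in>RE. \<exists>\<sigma>. s = subst \<sigma> l \<and> t = subst \<sigma> r) \<longrightarrow> \<not> guarded s"
proof (intro allI impI)
  fix s t
  assume "\<exists>(l, r)\<in>RE. \<exists>\<sigma>. s = subst \<sigma> l \<and> t = subst \<sigma> r"
  then obtain l r \<sigma> where "(l, r) \<in> RE" "s = subst \<sigma> l"
    by auto
  moreover from \<open>(l, r) \<in> RE\<close> E have "eterm l" "\<forall>x. l \<noteq> Var x"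
    unfolding E_theory_def by auto
  then obtain f xs where "l = Fn f xs"
    by (cases l) auto
  ultimately show "\<not> guarded s" by auto
qed

lemma normal_bin_app:
  assumes "normal oplus RE x" "normal oplus RE y"
  shows "normal oplus RE (bin_app b x y)"
  unfolding normal_def
proof
  assume "\<exists>u. rstep_ac oplus RE (bin_app b x y) u"
  then obtain s' t' where "ac_eq oplus (bin_app b x y) s'" "rstep RE s' t'"
    unfolding rstep_ac_def by blast
  then obtain x1 y1 where s': "s' = bin_app b x1 y1" "ac_eq oplus x x1" "ac_eq oplus y y1"
    and "rstep RE (bin_app b x1 y1) t'"
    using ac_eq_bin_app_cases by blast
  then have "(\<exists>x2. rstep RE x1 x2) \<or> (\<exists>y2. rstep RE y1 y2)"
    using ctx_cl_bin_app_cases[OF rule_instance_unguarded] unfolding rstep_def by blast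
  then have "(\<exists>x2. rstep_ac oplus RE x x2) \<or> (\<exists>y2. rstep_ac oplus RE y y2)"
    using s' ac_eq_rstep_imp_rstep_ac by blast
  then show False
    using assms unfolding normal_def by blast
qed

lemma normal_Pub:
  assumes "normal oplus RE x"
  shows "normal oplus RE (Pub x)"
  unfolding normal_def
proof
  assume "\<exists>u. rstep_ac oplus RE (Pub x) u"
  then obtain s' t' where "ac_eq oplus (Pub x) s'" "rstep RE s' t'"
    unfolding rstep_ac_def by blast
  then obtain x1 where "ac_eq oplus x x1" "rstep RE (Pub x1) t'"
    using ac_eq_Pub_cases by blast
  then have "\<exists>x2. rstep_ac oplus RE x x2"
    using ctx_cl_Pub_cases[OF rule_instance_unguarded] ac_eq_rstep_imp_rstep_ac
    unfolding rstep_def by blast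
  then show False
    using assms unfolding normal_def by blast
qed

lemma normal_form_exists: "\<exists>N. (rstep_ac oplus RE)\<^sup>*\<^sup>* M N \<and> normal oplus RE N"
proof -
  have "wfP (\<lambda>t s. rstep_ac oplus RE s t)"
    using E unfolding E_theory_def by blast
  then show ?thesis
  proof (induction M rule: wfp_induct_rule)
    case (less M)
    show ?case
    proof (cases "normal oplus RE M")
      case False
      then obtain u where "rstep_ac oplus RE M u"
        unfolding normal_def by blast
      with less show ?thesis
        by (meson converse_rtranclp_into_rtranclp)
    qed blast
  qed
qed

lemma nf_normal: "normal oplus RE (nf oplus RE M)"
  and nf_approxE: "approxE oplus RE (nf oplus RE M) M"
  using someI_ex[OF normal_form_exists[of M]] rtranclp_rstep_ac_imp_approxE approxE_sym
  unfolding nf_def by blast+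

end

lemma Sq_nfseq: "Sq ar oplus RE \<Gamma> M \<Longrightarrow> nfseq oplus RE \<Gamma> M"
  by (cases rule: Sq.cases) auto

lemma ectx_cl_mono: "C \<in> ectx_cl ar \<Gamma> \<Longrightarrow> \<Gamma> \<subseteq> \<Delta> \<Longrightarrow> C \<in> ectx_cl ar \<Delta>"
  by (induction rule: ectx_cl.induct) (auto intro: ectx_cl.intros)

lemma Sq_weaken:
  assumes "Sq ar oplus RE \<Gamma> M" "normal oplus RE B"
  shows "Sq ar oplus RE (insert B \<Gamma>) M"
  using assms
proof (induction rule: Sq.induct)
  case (S_id \<Gamma> M C)
  then show ?case by (intro Sq.S_id[where C = C]) (auto simp: nfseq_def intro: ectx_cl_mono)
next
  case (S_pL M N \<Gamma> T)
  then show ?case using Sq.S_pL[where \<Gamma> = "insert B \<Gamma>"] by (simp add: nfseq_def insert_commute)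
next
  case (S_eL M K \<Gamma> N)
  then show ?case using Sq.S_eL[where \<Gamma> = "insert B \<Gamma>"] by (simp add: nfseq_def insert_commute)
next
  case (S_signL L M K \<Gamma> N)
  then show ?case using Sq.S_signL[where \<Gamma> = "insert B \<Gamma>"] by (simp add: nfseq_def insert_commute)
next
  case (S_blindL1 M K \<Gamma> N)
  then show ?case using Sq.S_blindL1[where \<Gamma> = "insert B \<Gamma>"] by (simp add: nfseq_def insert_commute)
next
  case (S_blindL2 M R K \<Gamma> N)
  then show ?case using Sq.S_blindL2[where \<Gamma> = "insert B \<Gamma>"] by (simp add: nfseq_def insert_commute)
qed (auto simp: nfseq_def insert_commute intro: Sq.intros)

lemma Sq_cut:
  assumes "Sq ar oplus RE \<Gamma> A" "Sq ar oplus RE (insert A \<Gamma>) T"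
  shows "Sq ar oplus RE \<Gamma> T"
  using Sq.S_cut[OF _ assms] Sq_nfseq[OF assms(1)] Sq_nfseq[OF assms(2)] by (simp add: nfseq_def)

lemma Sq_cut_list:
  assumes "\<forall>A\<in>set As. Sq ar oplus RE \<Gamma> A" "Sq ar oplus RE (\<Gamma> \<union> set As) T"
  shows "Sq ar oplus RE \<Gamma> T"
  using assms
proof (induction As arbitrary: \<Gamma>)
  case (Cons A As)
  have A: "Sq ar oplus RE \<Gamma> A"
    using Cons.prems(1) by simp
  then have "normal oplus RE A"
    using Sq_nfseq nfseq_def by blast
  then have "\<forall>B\<in>set As. Sq ar oplus RE (insert A \<Gamma>) B"
    using Cons.prems(1) by (simp add: Sq_weaken)
  moreover have "Sq ar oplus RE (insert A \<Gamma> \<union> set As) T"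
    using Cons.prems(2) by simp
  ultimately have "Sq ar oplus RE (insert A \<Gamma>) T"
    by (rule Cons.IH)
  with A show ?case
    by (rule Sq_cut)
qed simp

lemma Sq_hyp_approxE:
  "nfseq oplus RE \<Gamma> T \<Longrightarrow> A \<in> \<Gamma> \<Longrightarrow> approxE oplus RE T A \<Longrightarrow> Sq ar oplus RE \<Gamma> T"
  by (rule Sq.S_id[where C = A]) (auto intro: ectx_cl.hole)

lemma Sq_hyp: "nfseq oplus RE \<Gamma> T \<Longrightarrow> T \<in> \<Gamma> \<Longrightarrow> Sq ar oplus RE \<Gamma> T"
  using Sq_hyp_approxE approxE_refl by blast

lemma Sq_replace:
  assumes "Sq ar oplus RE \<Gamma> A" "normal oplus RE B" "approxE oplus RE B A"
  shows "Sq ar oplus RE \<Gamma> B"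
proof (rule Sq_cut[OF assms(1)])
  show "Sq ar oplus RE (insert A \<Gamma>) B"
    using Sq_nfseq[OF assms(1)] assms(2,3) by (intro Sq_hyp_approxE[where A = A]) (auto simp: nfseq_def)
qed

lemma Sq_bin_app_R:
  "nfseq oplus RE \<Gamma> (bin_app b M K) \<Longrightarrow> Sq ar oplus RE \<Gamma> M \<Longrightarrow> Sq ar oplus RE \<Gamma> K
   \<Longrightarrow> Sq ar oplus RE \<Gamma> (bin_app b M K)"
  by (cases b) (auto intro: Sq.S_signR Sq.S_blindR Sq.S_pR Sq.S_eR)

lemma Sq_keyed_L:
  assumes "b \<in> {EncC, BlindC}"
    and "nfseq oplus RE (insert (bin_app b M K) \<Gamma>) N"
    and "Sq ar oplus RE (insert (bin_app b M K) \<Gamma>) K"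
    and "Sq ar oplus RE (insert K (insert M (insert (bin_app b M K) \<Gamma>))) N"
  shows "Sq ar oplus RE (insert (bin_app b M K) \<Gamma>) N"
  using assms by (auto intro: Sq.S_eL Sq.S_blindL1)

section \<open>Soundness\<close>

lemma Nd_ectx_cl: "C \<in> ectx_cl ar \<Delta> \<Longrightarrow> \<forall>N\<in>\<Delta>. Nd ar oplus RE \<Gamma> N \<Longrightarrow> Nd ar oplus RE \<Gamma> C"
  by (induction rule: ectx_cl.induct) (auto intro: Nd.intros)

lemma Sq_imp_Nd:
  "Sq ar oplus RE \<Delta> T \<Longrightarrow> \<forall>N\<in>\<Delta>. Nd ar oplus RE \<Gamma> N \<Longrightarrow> Nd ar oplus RE \<Gamma> T"
proof (induction rule: Sq.induct)
  case (S_id \<Delta> M C)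
  then show ?case using Nd_ectx_cl Nd.N_approx by blast
next
  case (S_signL L M K \<Delta> N)
  have "approxE oplus RE (Pub K) (Pub L)"
    using S_signL(2) by (intro approxE_Pub ac_eq_imp_approxE)
  moreover have "Nd ar oplus RE \<Gamma> (Pub L)" "Nd ar oplus RE \<Gamma> (Sign M K)"
    using S_signL.prems by (auto intro: Nd.N_id)
  ultimately have "Nd ar oplus RE \<Gamma> M"
    by (auto intro: Nd.N_signE Nd.N_approx)
  with S_signL show ?case by auto
qed (auto intro: Nd.intros)

section \<open>Completeness\<close>

context
  fixes ar oplus RE
  assumes E: "E_theory ar oplus RE"
begin

lemma Sq_from_nf:
  assumes "Sq ar oplus RE \<Delta> (nf oplus RE N)" "normal oplus RE B" "approxE oplus RE B N"
  shows "Sq ar oplus RE \<Delta> B"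
  using assms(1,2) approxE_trans[OF assms(3) approxE_sym[OF nf_approxE[OF E]]] by (rule Sq_replace)

lemma Sq_to_nf:
  assumes "Sq ar oplus RE \<Delta> B" "approxE oplus RE B N"
  shows "Sq ar oplus RE \<Delta> (nf oplus RE N)"
  using assms(1) nf_normal[OF E] approxE_trans[OF nf_approxE[OF E] approxE_sym[OF assms(2)]]
  by (rule Sq_replace)

lemma Sq_nf_approxE:
  assumes "Sq ar oplus RE \<Delta> (nf oplus RE N)" "approxE oplus RE M N"
  shows "Sq ar oplus RE \<Delta> (nf oplus RE M)"
  using assms(1) nf_normal[OF E] approxE_trans[OF nf_approxE[OF E] assms(2)] by (rule Sq_from_nf)

lemma normal_bin_app_nf: "normal oplus RE (bin_app b (nf oplus RE M) (nf oplus RE K))"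
  by (intro normal_bin_app[OF E] nf_normal[OF E])

lemma approxE_bin_app_nf: "approxE oplus RE (bin_app b (nf oplus RE M) (nf oplus RE K)) (bin_app b M K)"
  by (intro approxE_bin_app nf_approxE[OF E])

lemma Sq_nf_bin_app_args:
  "Sq ar oplus RE \<Delta> (nf oplus RE (bin_app b M K))
   \<Longrightarrow> Sq ar oplus RE \<Delta> (bin_app b (nf oplus RE M) (nf oplus RE K))"
  using Sq_from_nf normal_bin_app_nf approxE_bin_app_nf by blast

lemma Sq_nf_bin_app_I:
  assumes "Sq ar oplus RE \<Delta> (nf oplus RE M)" "Sq ar oplus RE \<Delta> (nf oplus RE K)"
  shows "Sq ar oplus RE \<Delta> (nf oplus RE (bin_app b M K))"
proof (rule Sq_to_nf)
  show "Sq ar oplus RE \<Delta> (bin_app b (nf oplus RE M) (nf oplus RE K))"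
    using assms Sq_nfseq[OF assms(1)] normal_bin_app_nf
    by (intro Sq_bin_app_R) (auto simp: nfseq_def)
qed (rule approxE_bin_app_nf)

lemma Sq_nf_keyed_E:
  assumes "b \<in> {EncC, BlindC}"
    and "Sq ar oplus RE \<Delta> (nf oplus RE (bin_app b M K))" "Sq ar oplus RE \<Delta> (nf oplus RE K)"
  shows "Sq ar oplus RE \<Delta> (nf oplus RE M)"
proof -
  let ?x = "nf oplus RE M" and ?k = "nf oplus RE K"
  let ?B = "bin_app b ?x ?k"
  have \<Delta>: "\<forall>N\<in>\<Delta>. normal oplus RE N"
    using Sq_nfseq[OF assms(3)] by (simp add: nfseq_def)
  have "Sq ar oplus RE (insert ?B \<Delta>) ?x"
  proof (rule Sq_keyed_L[OF assms(1)])
    show "Sq ar oplus RE (insert ?B \<Delta>) ?k"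
      using assms(3) normal_bin_app_nf by (rule Sq_weaken)
    show "Sq ar oplus RE (insert ?k (insert ?x (insert ?B \<Delta>))) ?x"
      using \<Delta> normal_bin_app_nf nf_normal[OF E] by (intro Sq_hyp) (auto simp: nfseq_def)
  qed (use \<Delta> normal_bin_app_nf nf_normal[OF E] in \<open>simp add: nfseq_def\<close>)
  with Sq_nf_bin_app_args[OF assms(2)] show ?thesis
    by (rule Sq_cut)
qed

lemma Sq_nf_Pair_E:
  assumes "Sq ar oplus RE \<Delta> (nf oplus RE (Pair M N))"
  shows "Sq ar oplus RE \<Delta> (nf oplus RE M)" "Sq ar oplus RE \<Delta> (nf oplus RE N)"
proof -
  let ?x = "nf oplus RE M" and ?y = "nf oplus RE N"
  have P: "Sq ar oplus RE \<Delta> (Pair ?x ?y)"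
    using Sq_nf_bin_app_args[of _ PairC] assms by simp
  have nf: "nfseq oplus RE (insert (Pair ?x ?y) \<Delta>) z" if "z \<in> {?x, ?y}" for z
    using Sq_nfseq[OF P] normal_bin_app_nf[of PairC] nf_normal[OF E] that by (auto simp: nfseq_def)
  have "Sq ar oplus RE (insert (Pair ?x ?y) \<Delta>) z" if "z \<in> {?x, ?y}" for z
    using nf[OF that] that nf_normal[OF E] by (intro Sq.S_pL Sq_hyp) (auto simp: nfseq_def)
  with P show "Sq ar oplus RE \<Delta> ?x" "Sq ar oplus RE \<Delta> ?y"
    by (auto intro: Sq_cut)
qed

lemma Sq_nf_Sign_E:
  assumes "Sq ar oplus RE \<Delta> (nf oplus RE (Sign M K))" "Sq ar oplus RE \<Delta> (nf oplus RE (Pub K))"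
  shows "Sq ar oplus RE \<Delta> (nf oplus RE M)"
proof -
  let ?x = "nf oplus RE M" and ?k = "nf oplus RE K"
  have S: "Sq ar oplus RE \<Delta> (Sign ?x ?k)"
    using Sq_nf_bin_app_args[of _ SignC] assms(1) by simp
  have "Sq ar oplus RE \<Delta> (Pub ?k)"
    using assms(2) normal_Pub[OF E nf_normal[OF E]] approxE_Pub[OF nf_approxE[OF E]] by (rule Sq_from_nf)
  then have P: "Sq ar oplus RE (insert (Sign ?x ?k) \<Delta>) (Pub ?k)"
    by (rule Sq_weaken) (use Sq_nfseq[OF S] in \<open>simp add: nfseq_def\<close>)
  have nf: "nfseq oplus RE (insert (Pub ?k) (insert (Sign ?x ?k) \<Delta>)) ?x"
    using Sq_nfseq[OF P] nf_normal[OF E] by (simp add: nfseq_def)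
  have "Sq ar oplus RE (insert (Pub ?k) (insert (Sign ?x ?k) \<Delta>)) ?x"
    using nf by (intro Sq.S_signL[OF nf ac_eq_refl] Sq_hyp) (auto simp: nfseq_def)
  with P have "Sq ar oplus RE (insert (Sign ?x ?k) \<Delta>) ?x"
    by (rule Sq_cut)
  with S show ?thesis
    by (rule Sq_cut)
qed

lemma Sq_nf_Blind_E2:
  assumes "Sq ar oplus RE \<Delta> (nf oplus RE (Sign (Blind M R) K))" "Sq ar oplus RE \<Delta> (nf oplus RE R)"
  shows "Sq ar oplus RE \<Delta> (nf oplus RE (Sign M K))"
proof -
  let ?x = "nf oplus RE M" and ?r = "nf oplus RE R" and ?k = "nf oplus RE K"
  let ?S = "Sign (Blind ?x ?r) ?k"
  have "normal oplus RE ?S"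
    using normal_bin_app_nf[of BlindC] normal_bin_app[OF E _ nf_normal[OF E], of _ SignC] by simp
  moreover have "approxE oplus RE ?S (Sign (Blind M R) K)"
    using approxE_bin_app_nf[of BlindC] approxE_bin_app[OF _ nf_approxE[OF E], of _ _ SignC] by simp
  ultimately have S: "Sq ar oplus RE \<Delta> ?S"
    by (rule Sq_from_nf[OF assms(1)])
  have nf: "nfseq oplus RE (insert ?S \<Delta>) (nf oplus RE (Sign M K))"
    using Sq_nfseq[OF S] \<open>normal oplus RE ?S\<close> nf_normal[OF E] by (simp add: nfseq_def)
  have "Sq ar oplus RE (insert ?S \<Delta>) (nf oplus RE (Sign M K))"
  proof (rule Sq.S_blindL2[OF nf])
    show "Sq ar oplus RE (insert ?S \<Delta>) ?r"
      using assms(2) \<open>normal oplus RE ?S\<close> by (rule Sq_weaken)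
    have "approxE oplus RE (nf oplus RE (Sign M K)) (Sign ?x ?k)"
      using approxE_trans[OF nf_approxE[OF E] approxE_sym[OF approxE_bin_app_nf[of SignC M K]]]
      by simp
    then show "Sq ar oplus RE (insert ?r (insert (Sign ?x ?k) (insert ?S \<Delta>))) (nf oplus RE (Sign M K))"
      using nf normal_bin_app_nf[of SignC] nf_normal[OF E]
      by (intro Sq_hyp_approxE[where A = "Sign ?x ?k"]) (auto simp: nfseq_def)
  qed
  with S show ?thesis
    by (rule Sq_cut)
qed

lemma Sq_nf_Fn_I:
  assumes "\<forall>N\<in>\<Delta>. normal oplus RE N" "length Ms = ar g" "\<forall>M\<in>set Ms. Sq ar oplus RE \<Delta> (nf oplus RE M)"
  shows "Sq ar oplus RE \<Delta> (nf oplus RE (Fn g Ms))"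
proof (rule Sq_cut_list)
  let ?Ns = "map (nf oplus RE) Ms"
  show "\<forall>N\<in>set ?Ns. Sq ar oplus RE \<Delta> N"
    using assms(3) by simp
  have "list_all2 (approxE oplus RE) Ms ?Ns"
    by (simp add: list_all2_conv_all_nth approxE_sym nf_approxE[OF E])
  then have "approxE oplus RE (nf oplus RE (Fn g Ms)) (Fn g ?Ns)"
    by (rule approxE_trans[OF nf_approxE[OF E] approxE_Fn])
  moreover have "Fn g ?Ns \<in> ectx_cl ar (\<Delta> \<union> set ?Ns)"
    using assms(2) by (intro ectx_cl.fn) (auto intro: ectx_cl.hole)
  ultimately show "Sq ar oplus RE (\<Delta> \<union> set ?Ns) (nf oplus RE (Fn g Ms))"
    using assms(1) nf_normal[OF E] by (intro Sq.S_id[where C = "Fn g ?Ns"]) (auto simp: nfseq_def)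
qed

lemma Nd_imp_Sq_nf: "Nd ar oplus RE \<Gamma> M \<Longrightarrow> Sq ar oplus RE (nf oplus RE ` \<Gamma>) (nf oplus RE M)"
proof (induction rule: Nd.induct)
  case (N_id M)
  then show ?case
    using nf_normal[OF E] by (intro Sq_hyp) (auto simp: nfseq_def)
next
  case (N_gI Ms g)
  then show ?case
    using nf_normal[OF E] by (intro Sq_nf_Fn_I) auto
next
  case (N_eE M K)
  then show ?case using Sq_nf_keyed_E[of EncC] by simp
next
  case (N_eI M K)
  then show ?case using Sq_nf_bin_app_I[of _ M K EncC] by simp
next
  case (N_pE1 M N)
  from N_pE1.IH show ?case by (rule Sq_nf_Pair_E)
next
  case (N_pE2 M N)
  from N_pE2.IH show ?case by (rule Sq_nf_Pair_E)
next
  case (N_pI M N)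
  then show ?case using Sq_nf_bin_app_I[of _ M N PairC] by simp
next
  case (N_signE M K)
  from N_signE.IH show ?case by (rule Sq_nf_Sign_E)
next
  case (N_signI M K)
  then show ?case using Sq_nf_bin_app_I[of _ M K SignC] by simp
next
  case (N_blindE1 M K)
  then show ?case using Sq_nf_keyed_E[of BlindC] by simp
next
  case (N_blindI M K)
  then show ?case using Sq_nf_bin_app_I[of _ M K BlindC] by simp
next
  case (N_blindE2 M R K)
  from N_blindE2.IH show ?case by (rule Sq_nf_Blind_E2)
next
  case (N_approx N M)
  from N_approx.IH N_approx.hyps(2) show ?case by (rule Sq_nf_approxE)
qed

end

theorem proposition1:
  fixes ar :: "'f \<Rightarrow> nat" and oplus :: "'f option" and RE :: "('f trm \<times> 'f trm) set"
    and \<Gamma> :: "'f trm set" and M :: "'f trm"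
  assumes "E_theory ar oplus RE"
    and "finite \<Gamma>"
    and "\<forall>N\<in>\<Gamma>. ground N \<and> wf_trm ar N"
    and "ground M" and "wf_trm ar M"
  shows "Nd ar oplus RE \<Gamma> M \<longleftrightarrow> Sq ar oplus RE (nf oplus RE ` \<Gamma>) (nf oplus RE M)"
proof
  assume "Nd ar oplus RE \<Gamma> M"
  then show "Sq ar oplus RE (nf oplus RE ` \<Gamma>) (nf oplus RE M)"
    by (rule Nd_imp_Sq_nf[OF assms(1)])
next
  assume "Sq ar oplus RE (nf oplus RE ` \<Gamma>) (nf oplus RE M)"
  moreover have "\<forall>N\<in>nf oplus RE ` \<Gamma>. Nd ar oplus RE \<Gamma> N"
    using nf_approxE[OF assms(1)] by (auto intro: Nd.N_id Nd.N_approx)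
  ultimately have "Nd ar oplus RE \<Gamma> (nf oplus RE M)"
    by (rule Sq_imp_Nd)
  then show "Nd ar oplus RE \<Gamma> M"
    using nf_approxE[OF assms(1)] approxE_sym by (blast intro: Nd.N_approx)
qed

end
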